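(* Under the hypotheses of the maximum-bound theorem for the unbalanced scheme (i.e. $K_2=1$, $r_k\ge4/7$ for $k\ge2$, $\kappa\ge\|f'\|_{C[-\beta,\beta]}$, $\|\phi^0\|_\infty\le\beta$, $\tau_1\le\min\{(4/(11\varsigma m(\kappa+4\varepsilon^2/h^2)\Gamma(2-\alpha)))^{1/\alpha},(4/(11\kappa(1-\varsigma)m\Gamma(2-\alpha)))^{1/\alpha}\}$ and $\tau_n\le(4/(11(1-\varsigma)m(4\varepsilon^2/h^2+\kappa)\Gamma(2-\alpha)))^{1/\alpha}$ for all $n\ge1$), the solution of the unbalanced $L2$-$1_\sigma$-sESAV scheme satisfies, for every $n\ge1$, $$\|\phi^n\|_\infty\le\beta+\frac{\kappa m(V^{n-\varsigma}-1)\beta}{B^{(n)}_0+\kappa(1-\varsigma)m},$$ where the second term is $\le0$.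
   Context: Setting: $\Omega=(0,L)^2$ with periodic boundary conditions; constants $m>0$, $\varepsilon>0$, $\alpha\in(0,1)$, and $\varsigma:=\alpha/2$. The nonlinearity $f=-F'$ is one of: (double-well) $F(\phi)=\frac14(1-\phi^2)^2$, $f(\phi)=\phi-\phi^3$, with $\beta=1$; or (Flory–Huggins) $F(\phi)=\frac{\theta}{2}[(1+\phi)\ln(1+\phi)+(1-\phi)\ln(1-\phi)]-\frac{\theta_c}{2}\phi^2$, $f(\phi)=\frac{\theta}{2}\ln\frac{1-\phi}{1+\phi}+\theta_c\phi$ on $(-1,1)$, with $\theta_c>\theta>0$ and $\beta\in(0,1)$ the positive root of $f$. In both cases $f(\pm\beta)=0$. Spatial discretization: $M\in\mathbb N$, $h=L/M$; $\mathbb V_h$ is the space of real grid functions $v=\{v_{ij}\}_{i,j\in\mathbb Z}$ that are $M$-periodic in each index; $\langle v,w\rangle=h^2\sum_{i,j=1}^Mv_{ij}w_{ij}$, $\|v\|_\infty=\max_{1\le i,j\le M}|v_{ij}|$; $\Delta_hv_{ij}=h^{-2}(v_{i+1,j}+v_{i-1,j}+v_{i,j+1}+v_{i,j-1}-4v_{ij})$. Scalar functions act on grid functions pointwise. $E_{1h}[v]=\langle F(v),1\rangle$ and $g_h(v,w)=\exp(w)/\exp(E_{1h}[v])$ for $v\in\mathbb V_h$ (with $\|v\|_\infty<1$ in the Flory–Huggins case) and $w\in\mathbb R$. Auxiliary functional: $V:\mathbb R\to\mathbb R$ satisfies (A1) $V\in C^1(\mathbb R)\cap W^{2,\infty}(\mathbb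 R)$, $V(1)=1$, $V'(1)=0$, $|V'|\le K_1$; (A2) $0\le V\le K_2$ for a constant $K_2>0$; (A3) $|z_1-1|\le|z_2-1|$ implies $|V(z_1)-1|\le|V(z_2)-1|$. Time grid: $0=t_0<t_1<\dots<t_N=T$, $\tau_k=t_k-t_{k-1}$, $r_k=\tau_k/\tau_{k-1}$ ($k\ge2$), $\nabla_\tau v^k=v^k-v^{k-1}$, $\mathbb D_\tau v^k=\nabla_\tau v^k/\tau_k$, $\omega_\mu(t)=t^{\mu-1}/\Gamma(\mu)$. Constant $\kappa\ge0$; data $\phi^0\in\mathbb V_h$, $R^0\in\mathbb R$. For $n\ge2$ the predicted solution is $\hat\phi^n=\min\{\max\{(1+r_n)\phi^{n-1}-r_n\phi^{n-2},-\beta\},\beta\}$ (pointwise). $L2$-$1_\sigma$ discretization: $t_{k-\varsigma}=(1-\varsigma)t_k+\varsigma t_{k-1}$, $t_{k-1/2}=(t_k+t_{k-1})/2$; $a^{(n)}_{n-k}=\frac1{\tau_k}\int_{t_{k-1}}^{\min\{t_k,t_{n-\varsigma}\}}\omega_{1-\alpha}(t_{n-\varsigma}-s)\,ds$ ($1\le k\le n$), $b^{(n)}_{n-k}=\frac{2}{\tau_k(\tau_k+\tau_{k+1})}\int_{t_{k-1}}^{t_k}(s-t_{k-1/2})\omega_{1-\alpha}(t_{n-\varsigma}-s)\,ds$ ($1\le k\le n-1$); $B^{(1)}_0=a^{(1)}_0$, and for $n\ge2$: $B^{(n)}_0=a^{(n)}_0+b^{(n)}_1/r_n$, $B^{(n)}_{n-k}=a^{(n)}_{n-k}+b^{(n)}_{n-k+1}/r_k-b^{(n)}_{n-k}$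 for $2\le k\le n-1$, $B^{(n)}_{n-1}=a^{(n)}_{n-1}-b^{(n)}_{n-1}$; $\tilde{\mathbb D}^\alpha_\tau v^n=\sum_{k=1}^nB^{(n)}_{n-k}\nabla_\tau v^k$; $w^{k-\varsigma}=(1-\varsigma)w^k+\varsigma w^{k-1}$. Unbalanced $L2$-$1_\sigma$-sESAV scheme: $\hat\phi^1\in\mathbb V_h$ with $\|\hat\phi^1\|_\infty\le\beta$ solves $B^{(1)}_0(\hat\phi^1-\phi^0)=m(\varepsilon^2\Delta_h\hat\phi^{1-\varsigma}+f(\hat\phi^{1-\varsigma}))$; for $n\ge2$, $\hat\phi^n$ is the predicted solution above. For $n\ge1$ set $\hat\phi^{n-\varsigma}=(1-\varsigma)\hat\phi^n+\varsigma\phi^{n-1}$ and $V^{n-\varsigma}=V(g_h(\hat\phi^{n-\varsigma},R^{n-1}))$, and define $(\phi^n,R^n)$ by $\tilde{\mathbb D}^\alpha_\tau\phi^n=m(\varepsilon^2\Delta_h\phi^{n-\varsigma}+V^{n-\varsigma}f(\hat\phi^{n-\varsigma})-\kappa(\phi^{n-\varsigma}-V^{n-\varsigma}\hat\phi^{n-\varsigma}))$ and $\mathbb D_\tau R^n=-V^{n-\varsigma}\langle f(\hat\phi^{n-\varsigma}),\mathbb D_\tau\phi^n\rangle+\kappa\langle\phi^{n-\varsigma}-V^{n-\varsigma}\hat\phi^{n-\varsigma},\mathbb D_\tau\phi^n\rangle$. *)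

theory Defs
  imports "HOL-Analysis.Analysis"
begin

text \<open>Grid functions: M-periodic grid functions are represented by their values on
  the index box 0..M-1 (indices shifted by one w.r.t. the paper); neighbours are
  taken modulo M.\<close>

type_synonym grid = "nat \<Rightarrow> nat \<Rightarrow> real"

definition lap_h :: "nat \<Rightarrow> real \<Rightarrow> grid \<Rightarrow> grid" where
  "lap_h M h v i j = (v ((i + 1) mod M) j + v ((i + M - 1) mod M) j
                     + v i ((j + 1) mod M) + v i ((j + M - 1) mod M) - 4 * v i j) / h^2"

definition norm_inf :: "nat \<Rightarrow> grid \<Rightarrow> real" where
  "norm_inf M v = Max ((\<lambda>(i, j). \<bar>v i j\<bar>) ` ({..<M} \<times> {..<M}))"

definition ip_h :: "nat \<Rightarrow> real \<Rightarrow> grid \<Rightarrow> grid \<Rightarrow> real" where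
  "ip_h M h v w = h^2 * (\<Sum>i<M. \<Sum>j<M. v i j * w i j)"

definition E1h :: "nat \<Rightarrow> real \<Rightarrow> (real \<Rightarrow> real) \<Rightarrow> grid \<Rightarrow> real" where
  "E1h M h F v = ip_h M h (\<lambda>i j. F (v i j)) (\<lambda>_ _. 1)"

definition g_h :: "nat \<Rightarrow> real \<Rightarrow> (real \<Rightarrow> real) \<Rightarrow> grid \<Rightarrow> real \<Rightarrow> real" where
  "g_h M h F v w = exp w / exp (E1h M h F v)"

definition omega :: "real \<Rightarrow> real \<Rightarrow> real" where
  "omega \<mu> s = s powr (\<mu> - 1) / Gamma \<mu>"

definition tau :: "(nat \<Rightarrow> real) \<Rightarrow> nat \<Rightarrow> real" where
  "tau t k = t k - t (k - 1)"

definition rr :: "(nat \<Rightarrow> real) \<Rightarrow> nat \<Rightarrow> real" where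
  "rr t k = tau t k / tau t (k - 1)"

definition tsig :: "real \<Rightarrow> (nat \<Rightarrow> real) \<Rightarrow> nat \<Rightarrow> real" where
  "tsig \<alpha> t n = (1 - \<alpha>/2) * t n + (\<alpha>/2) * t (n - 1)"

definition tmid :: "(nat \<Rightarrow> real) \<Rightarrow> nat \<Rightarrow> real" where
  "tmid t k = (t k + t (k - 1)) / 2"

text \<open>acoef \<alpha> t n k is the paper's a^{(n)}_{n-k}; bcoef \<alpha> t n k is b^{(n)}_{n-k}.\<close>

definition acoef :: "real \<Rightarrow> (nat \<Rightarrow> real) \<Rightarrow> nat \<Rightarrow> nat \<Rightarrow> real" where
  "acoef \<alpha> t n k = (1 / tau t k) *
     integral {t (k - 1) .. min (t k) (tsig \<alpha> t n)} (\<lambda>s. omega (1 - \<alpha>) (tsig \<alpha> t n - s))"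

definition bcoef :: "real \<Rightarrow> (nat \<Rightarrow> real) \<Rightarrow> nat \<Rightarrow> nat \<Rightarrow> real" where
  "bcoef \<alpha> t n k = 2 / (tau t k * (tau t k + tau t (k + 1))) *
     integral {t (k - 1) .. t k} (\<lambda>s. (s - tmid t k) * omega (1 - \<alpha>) (tsig \<alpha> t n - s))"

text \<open>Bcoef \<alpha> t n k is the paper's B^{(n)}_{n-k}, for 1 \<le> k \<le> n.\<close>

definition Bcoef :: "real \<Rightarrow> (nat \<Rightarrow> real) \<Rightarrow> nat \<Rightarrow> nat \<Rightarrow> real" where
  "Bcoef \<alpha> t n k =
     (if n = 1 then acoef \<alpha> t 1 1
      else if k = n then acoef \<alpha> t n n + bcoef \<alpha> t n (n - 1) / rr t n
      else if k = 1 then acoef \<alpha> t n 1 - bcoef \<alpha> t n 1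
      else acoef \<alpha> t n k + bcoef \<alpha> t n (k - 1) / rr t k - bcoef \<alpha> t n k)"

end

theory Submission
  imports Defs
begin

text \<open>For step ratios \<open>r\<^sub>k \<ge> 4/7\<close> each L2-1\<open>\<^sub>\<sigma>\<close> coefficient \<open>B^(n)_(n-k)\<close> with \<open>k < n\<close>
  lies between the values of the kernel \<open>\<omega>\<^sub>1\<^sub>-\<^sub>\<alpha>(t_(n-\<sigma>) - s)\<close> at \<open>s = t_(k-1)\<close> and
  \<open>s = t_k\<close> (by convexity of the kernel), so these coefficients are nonnegative and
  nondecreasing in \<open>k\<close>; the step-size restriction makes the diagonal gap
  \<open>B^(n)_0 - B^(n)_1\<close> at least \<open>\<sigma> m (\<kappa> + 4\<epsilon>\<^sup>2/h\<^sup>2)\<close>. At a grid point where \<open>\<phi>^n\<close> is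
  maximal the discrete Laplacian of \<open>\<phi>^n\<close> is nonpositive, Abel summation bounds the history
  part of the L2-1\<open>\<^sub>\<sigma>\<close> sum, and \<open>|f'| \<le> \<kappa>\<close> keeps \<open>f(y) + \<kappa> y\<close> in \<open>[-\<kappa>\<beta>, \<kappa>\<beta>]\<close> for
  \<open>|y| \<le> \<beta>\<close>; solving the scheme for \<open>\<phi>^n\<close> at that point gives the bound. The minimum is
  treated by symmetry, and induction on \<open>n\<close> keeps all earlier iterates in \<open>[-\<beta>, \<beta>]\<close>.\<close>

section \<open>Convexity of the kernel\<close>

definition frac_kernel :: "real \<Rightarrow> real \<Rightarrow> real \<Rightarrow> real" where
  "frac_kernel \<alpha> T s = omega (1 - \<alpha>) (T - s)"

definition frac_kernel_deriv :: "real \<Rightarrow> real \<Rightarrow> real \<Rightarrow> real" where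
  "frac_kernel_deriv \<alpha> T s = \<alpha> * (T - s) powr (- \<alpha> - 1) / Gamma (1 - \<alpha>)"

lemma Gamma_one_minus_pos: "(\<alpha>::real) < 1 \<Longrightarrow> 0 < Gamma (1 - \<alpha>)"
  by (simp add: Gamma_real_pos)

lemma Gamma_two_minus: "(\<alpha>::real) < 1 \<Longrightarrow> Gamma (2 - \<alpha>) = (1 - \<alpha>) * Gamma (1 - \<alpha>)"
proof -
  assume "\<alpha> < 1"
  hence "1 - \<alpha> \<notin> \<int>\<^sub>\<le>\<^sub>0" by (auto elim!: nonpos_Ints_cases)
  from Gamma_plus1[OF this] show ?thesis by (simp add: algebra_simps)
qed

lemma frac_kernel_eq: "frac_kernel \<alpha> T s = (T - s) powr (- \<alpha>) / Gamma (1 - \<alpha>)"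
  by (simp add: frac_kernel_def omega_def)

lemma frac_kernel_nonneg: "\<alpha> < 1 \<Longrightarrow> 0 \<le> frac_kernel \<alpha> T s"
  unfolding frac_kernel_eq using Gamma_one_minus_pos by auto

lemma frac_kernel_deriv_nonneg: "0 \<le> \<alpha> \<Longrightarrow> \<alpha> < 1 \<Longrightarrow> 0 \<le> frac_kernel_deriv \<alpha> T s"
  unfolding frac_kernel_deriv_def using Gamma_one_minus_pos by auto

lemma frac_kernel_deriv_mono:
  assumes "0 \<le> \<alpha>" "\<alpha> < 1" "a \<le> b" "b < T"
  shows "frac_kernel_deriv \<alpha> T a \<le> frac_kernel_deriv \<alpha> T b"
proof -
  have "(T - a) powr (- \<alpha> - 1) \<le> (T - b) powr (- \<alpha> - 1)"
    by (rule powr_mono2') (use assms in auto)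
  thus ?thesis
    unfolding frac_kernel_deriv_def using Gamma_one_minus_pos[OF assms(2)] assms(1)
    by (intro divide_right_mono mult_left_mono) auto
qed

lemma frac_kernel_has_real_derivative:
  assumes "s < T"
  shows "(frac_kernel \<alpha> T has_real_derivative frac_kernel_deriv \<alpha> T s) (at s)"
proof -
  have "((\<lambda>s. (T - s) powr (- \<alpha>)) has_real_derivative
        - \<alpha> * (T - s) powr (- \<alpha> - real 1) * (- 1)) (at s)"
    by (rule DERIV_fun_powr) (use assms in \<open>auto intro!: derivative_eq_intros\<close>)
  from DERIV_cdivide[OF this, of "Gamma (1 - \<alpha>)"] show ?thesis
    unfolding frac_kernel_deriv_def frac_kernel_eq[abs_def] by simp
qed

lemma continuous_on_frac_kernel: "b < T \<Longrightarrow> continuous_on {a..b} (frac_kernel \<alpha> T)"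
  unfolding frac_kernel_eq divide_inverse by (intro continuous_intros) auto

lemma frac_kernel_increment_bounds:
  assumes "0 \<le> \<alpha>" "\<alpha> < 1" "a \<le> x" "x \<le> y" "y \<le> b" "b < T"
  shows "frac_kernel_deriv \<alpha> T a * (y - x) \<le> frac_kernel \<alpha> T y - frac_kernel \<alpha> T x"
    and "frac_kernel \<alpha> T y - frac_kernel \<alpha> T x \<le> frac_kernel_deriv \<alpha> T b * (y - x)"
proof -
  obtain z where z: "x \<le> z" "z \<le> y"
    "frac_kernel \<alpha> T y - frac_kernel \<alpha> T x = (y - x) * frac_kernel_deriv \<alpha> T z"
  proof (cases "x = y")
    case False
    hence "x < y" using assms(4) by simp
    from MVT2[OF this, of "frac_kernel \<alpha> T" "frac_kernel_deriv \<alpha> T"] assms(5,6)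
    obtain z where "x < z" "z < y"
      "frac_kernel \<alpha> T y - frac_kernel \<alpha> T x = (y - x) * frac_kernel_deriv \<alpha> T z"
      using frac_kernel_has_real_derivative by force
    thus ?thesis using that[of z] by simp
  qed (use that[of x] in simp)
  have "frac_kernel_deriv \<alpha> T a \<le> frac_kernel_deriv \<alpha> T z" "frac_kernel_deriv \<alpha> T z \<le> frac_kernel_deriv \<alpha> T b"
    using assms z by (auto intro!: frac_kernel_deriv_mono)
  moreover have "0 \<le> y - x" using assms by simp
  ultimately show "frac_kernel_deriv \<alpha> T a * (y - x) \<le> frac_kernel \<alpha> T y - frac_kernel \<alpha> T x"
    and "frac_kernel \<alpha> T y - frac_kernel \<alpha> T x \<le> frac_kernel_deriv \<alpha> T b * (y - x)"
    unfolding z(3) by (simp_all add: mult.commute mult_left_mono)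
qed

lemma frac_kernel_secant_bounds:
  assumes "0 \<le> \<alpha>" "\<alpha> < 1" "x \<in> {a..b}" "y \<in> {a..b}" "b < T"
  shows "0 \<le> (y - x) * (frac_kernel \<alpha> T y - frac_kernel \<alpha> T x)"
    and "(y - x) * (frac_kernel \<alpha> T y - frac_kernel \<alpha> T x) \<le> frac_kernel_deriv \<alpha> T b * (y - x)^2"
proof -
  have *: "0 \<le> (v - u) * (frac_kernel \<alpha> T v - frac_kernel \<alpha> T u)
      \<and> (v - u) * (frac_kernel \<alpha> T v - frac_kernel \<alpha> T u) \<le> frac_kernel_deriv \<alpha> T b * (v - u)^2"
    if "u \<in> {a..b}" "v \<in> {a..b}" "u \<le> v" for u v
  proof -
    have "a \<le> u" "u \<le> v" "v \<le> b" using that by auto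
    note inc = frac_kernel_increment_bounds[OF assms(1,2) this assms(5)]
    have "0 \<le> frac_kernel_deriv \<alpha> T a * (v - u)"
      using frac_kernel_deriv_nonneg[OF assms(1,2)] that by simp
    hence "0 \<le> frac_kernel \<alpha> T v - frac_kernel \<alpha> T u" using inc(1) by linarith
    hence "0 \<le> (v - u) * (frac_kernel \<alpha> T v - frac_kernel \<alpha> T u)" using that by simp
    moreover have "(v - u) * (frac_kernel \<alpha> T v - frac_kernel \<alpha> T u) \<le> (v - u) * (frac_kernel_deriv \<alpha> T b * (v - u))"
      using inc(2) that by (intro mult_left_mono) auto
    ultimately show ?thesis by (simp add: power2_eq_square mult_ac)
  qed
  have sym: "(y - x) * (frac_kernel \<alpha> T y - frac_kernel \<alpha> T x) = (x - y) * (frac_kernel \<alpha> T x - frac_kernel \<alpha> T y)"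
    "(y - x)^2 = (x - y)^2"
    by (simp_all add: algebra_simps power2_commute)
  have "0 \<le> (y - x) * (frac_kernel \<alpha> T y - frac_kernel \<alpha> T x)
      \<and> (y - x) * (frac_kernel \<alpha> T y - frac_kernel \<alpha> T x) \<le> frac_kernel_deriv \<alpha> T b * (y - x)^2"
  proof (cases "x \<le> y")
    case True
    then show ?thesis using *[of x y] assms(3,4) by blast
  next
    case False
    then show ?thesis unfolding sym using *[of y x] assms(3,4) by simp
  qed
  then show "0 \<le> (y - x) * (frac_kernel \<alpha> T y - frac_kernel \<alpha> T x)"
    and "(y - x) * (frac_kernel \<alpha> T y - frac_kernel \<alpha> T x) \<le> frac_kernel_deriv \<alpha> T b * (y - x)^2"
    by blast+
qed

lemma has_integral_antiderivative:
  fixes f F :: "real \<Rightarrow> real"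
  assumes "a \<le> b" "\<And>x. (F has_real_derivative f x) (at x)" "F b - F a = v"
  shows "(f has_integral v) {a..b}"
proof -
  have "(f has_integral F b - F a) {a..b}"
    by (rule fundamental_theorem_of_calculus)
       (use assms in \<open>auto simp: has_real_derivative_iff_has_vector_derivative[symmetric]
          intro: has_field_derivative_at_within\<close>)
  thus ?thesis using assms(3) by simp
qed

lemma has_integral_centered:
  "a \<le> b \<Longrightarrow> ((\<lambda>s. s - (b + a)/2) has_integral 0) {a..b::real}"
  by (rule has_integral_antiderivative[where F="\<lambda>s. (s - (b + a)/2)^2/2"])
     (auto intro!: derivative_eq_intros simp: power2_eq_square algebra_simps divide_simps)

lemma has_integral_centered_square:
  "a \<le> b \<Longrightarrow> ((\<lambda>s. (s - (b + a)/2)^2) has_integral (b - a)^3/12) {a..b::real}"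
  by (rule has_integral_antiderivative[where F="\<lambda>s. (s - (b + a)/2)^3/3"])
     (auto intro!: derivative_eq_intros simp: power2_eq_square power3_eq_cube algebra_simps divide_simps)

lemma has_integral_distance_to_right:
  "a \<le> b \<Longrightarrow> ((\<lambda>s. b - s) has_integral (b - a)^2/2) {a..b::real}"
  by (rule has_integral_antiderivative[where F="\<lambda>s. (b - s) * (s - b) / 2"])
     (auto intro!: derivative_eq_intros simp: power2_eq_square algebra_simps divide_simps)

lemma has_integral_one: "a \<le> b \<Longrightarrow> ((\<lambda>s. 1) has_integral (b - a)) {a..b::real}"
  using has_integral_const_real[of "1::real" a b] by simp

context
  fixes \<alpha> T a b :: real
  assumes \<alpha>: "0 \<le> \<alpha>" "\<alpha> < 1" and ab: "a < b" "b < T"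
begin

lemma frac_kernel_has_integral: "(frac_kernel \<alpha> T has_integral integral {a..b} (frac_kernel \<alpha> T)) {a..b}"
  using continuous_on_frac_kernel[OF ab(2)] integrable_continuous_interval integrable_integral by blast

lemma frac_kernel_moment_has_integral:
  "((\<lambda>s. (s - (b + a)/2) * frac_kernel \<alpha> T s) has_integral
     integral {a..b} (\<lambda>s. (s - (b + a)/2) * frac_kernel \<alpha> T s)) {a..b}"
proof -
  have "continuous_on {a..b} (\<lambda>s. (s - (b + a)/2) * frac_kernel \<alpha> T s)"
    by (intro continuous_intros continuous_on_frac_kernel ab)
  thus ?thesis using integrable_continuous_interval integrable_integral by blast
qed

lemma frac_kernel_moment_bounds:
  shows "0 \<le> integral {a..b} (\<lambda>s. (s - (b + a)/2) * frac_kernel \<alpha> T s)"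
    and "integral {a..b} (\<lambda>s. (s - (b + a)/2) * frac_kernel \<alpha> T s) \<le> frac_kernel_deriv \<alpha> T b * (b - a)^3/12"
proof -
  let ?\<mu> = "(b + a)/2"
  text \<open>Subtracting the vanishing integral of \<open>(s - \<mu>) * frac_kernel \<alpha> T \<mu>\<close> leaves a
    secant term, which convexity of the kernel controls.\<close>
  have secant: "((\<lambda>s. (s - ?\<mu>) * (frac_kernel \<alpha> T s - frac_kernel \<alpha> T ?\<mu>)) has_integral
      integral {a..b} (\<lambda>s. (s - ?\<mu>) * frac_kernel \<alpha> T s)) {a..b}"
    using has_integral_diff[OF frac_kernel_moment_has_integral
        has_integral_mult_right[OF has_integral_centered, of a b "frac_kernel \<alpha> T ?\<mu>"]] ab
    by (simp add: algebra_simps)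
  have \<mu>: "?\<mu> \<in> {a..b}" using ab by simp
  note sec = frac_kernel_secant_bounds[OF \<alpha> \<mu> _ ab(2)]
  show "0 \<le> integral {a..b} (\<lambda>s. (s - ?\<mu>) * frac_kernel \<alpha> T s)"
    by (rule has_integral_nonneg[OF secant sec(1)])
  have "((\<lambda>s. frac_kernel_deriv \<alpha> T b * (s - ?\<mu>)^2) has_integral frac_kernel_deriv \<alpha> T b * ((b - a)^3/12)) {a..b}"
    using has_integral_centered_square ab by (intro has_integral_mult_right) auto
  from has_integral_le[OF secant this sec(2)]
  show "integral {a..b} (\<lambda>s. (s - ?\<mu>) * frac_kernel \<alpha> T s) \<le> frac_kernel_deriv \<alpha> T b * (b - a)^3/12"
    by simp
qed

lemma frac_kernel_integral_le:
  "integral {a..b} (frac_kernel \<alpha> T) \<le> (b - a) * frac_kernel \<alpha> T b - frac_kernel_deriv \<alpha> T a * (b - a)^2/2"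
proof -
  have "frac_kernel \<alpha> T s \<le> frac_kernel \<alpha> T b * 1 - frac_kernel_deriv \<alpha> T a * (b - s)" if "s \<in> {a..b}" for s
    using frac_kernel_increment_bounds(1)[OF \<alpha>, of a s b b T] that ab by auto
  moreover have "((\<lambda>s. frac_kernel \<alpha> T b * 1 - frac_kernel_deriv \<alpha> T a * (b - s)) has_integral
      frac_kernel \<alpha> T b * (b - a) - frac_kernel_deriv \<alpha> T a * ((b - a)^2/2)) {a..b}"
    using ab by (intro has_integral_diff has_integral_mult_right has_integral_one
        has_integral_distance_to_right) auto
  ultimately have "integral {a..b} (frac_kernel \<alpha> T)
      \<le> frac_kernel \<alpha> T b * (b - a) - frac_kernel_deriv \<alpha> T a * ((b - a)^2/2)"
    by (intro has_integral_le[OF frac_kernel_has_integral]) auto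
  thus ?thesis by (simp add: algebra_simps)
qed

lemma frac_kernel_weighted_integral_ge:
  assumes "0 \<le> q" "q * (b - a)/2 \<le> p"
  shows "p * (b - a) * frac_kernel \<alpha> T a \<le>
    p * integral {a..b} (frac_kernel \<alpha> T) - q * integral {a..b} (\<lambda>s. (s - (b + a)/2) * frac_kernel \<alpha> T s)"
proof -
  let ?\<mu> = "(b + a)/2"
  have "frac_kernel \<alpha> T a * (p * 1 - q * (s - ?\<mu>)) \<le> p * frac_kernel \<alpha> T s - q * ((s - ?\<mu>) * frac_kernel \<alpha> T s)"
    if s: "s \<in> {a..b}" for s
  proof -
    have "q * (s - ?\<mu>) \<le> q * ((b - a)/2)"
      using s assms by (intro mult_left_mono) (auto simp: field_simps)
    hence nonneg: "0 \<le> p - q * (s - ?\<mu>)" using assms by simp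
    have "0 \<le> frac_kernel_deriv \<alpha> T a * (s - a)"
      using frac_kernel_deriv_nonneg[OF \<alpha>, of T a] s by simp
    hence "frac_kernel \<alpha> T a \<le> frac_kernel \<alpha> T s"
      using frac_kernel_increment_bounds(1)[OF \<alpha>, of a a s b T] s ab by simp
    hence "frac_kernel \<alpha> T a * (p - q * (s - ?\<mu>)) \<le> frac_kernel \<alpha> T s * (p - q * (s - ?\<mu>))"
      using nonneg by (rule mult_right_mono)
    thus ?thesis by (simp add: algebra_simps)
  qed
  moreover have "((\<lambda>s. frac_kernel \<alpha> T a * (p * 1 - q * (s - ?\<mu>))) has_integral
      frac_kernel \<alpha> T a * (p * (b - a) - q * 0)) {a..b}"
    using ab by (intro has_integral_mult_right has_integral_diff has_integral_one has_integral_centered) auto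
  ultimately have "frac_kernel \<alpha> T a * (p * (b - a) - q * 0) \<le>
      p * integral {a..b} (frac_kernel \<alpha> T) - q * integral {a..b} (\<lambda>s. (s - ?\<mu>) * frac_kernel \<alpha> T s)"
    by (intro has_integral_le[OF _ has_integral_diff[OF has_integral_mult_right[OF frac_kernel_has_integral]
          has_integral_mult_right[OF frac_kernel_moment_has_integral]]]) auto
  thus ?thesis by (simp add: algebra_simps)
qed

end

lemma frac_kernel_has_integral_up_to_pole:
  assumes "0 \<le> \<alpha>" "\<alpha> < 1" "c < T"
  shows "(frac_kernel \<alpha> T has_integral (T - c) powr (1 - \<alpha>) / Gamma (2 - \<alpha>)) {c..T}"
proof -
  let ?F = "\<lambda>s. - ((T - s) powr (1 - \<alpha>) / Gamma (2 - \<alpha>))"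
  have G: "Gamma (2 - \<alpha>) = (1 - \<alpha>) * Gamma (1 - \<alpha>)" "0 < Gamma (2 - \<alpha>)"
    using Gamma_two_minus assms(2) by (auto simp: Gamma_real_pos)
  have "continuous_on {c..T} (\<lambda>s. (T - s) powr (1 - \<alpha>))"
    by (rule continuous_on_powr') (use assms in \<open>auto intro!: continuous_intros\<close>)
  hence cont: "continuous_on {c..T} ?F"
    using G(2) by (intro continuous_on_minus continuous_on_divide continuous_on_const) auto
  have "(?F has_real_derivative frac_kernel \<alpha> T x) (at x)" if x: "x \<in> {c<..<T}" for x
  proof -
    have "((\<lambda>s. (T - s) powr (1 - \<alpha>)) has_real_derivative
        (1 - \<alpha>) * (T - x) powr (1 - \<alpha> - real 1) * (- 1)) (at x)"
      by (rule DERIV_fun_powr) (use x in \<open>auto intro!: derivative_eq_intros\<close>)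
    from DERIV_minus[OF DERIV_cdivide[OF this, of "Gamma (2 - \<alpha>)"]] show ?thesis
      unfolding frac_kernel_eq G(1) using assms by simp
  qed
  hence "(frac_kernel \<alpha> T has_integral ?F T - ?F c) {c..T}"
    using assms by (intro fundamental_theorem_of_calculus_interior[OF _ cont])
      (auto simp: has_real_derivative_iff_has_vector_derivative)
  thus ?thesis using assms by simp
qed

section \<open>The L2-1\<open>\<^sub>\<sigma>\<close> coefficients\<close>

lemma time_grid_mono:
  fixes t :: "nat \<Rightarrow> real"
  assumes tinc: "\<And>k. 1 \<le> k \<Longrightarrow> k \<le> n \<Longrightarrow> t (k - 1) < t k" and "i \<le> j" "j \<le> n"
  shows "t i \<le> t j"
  using assms(2,3)
proof (induction j)
  case (Suc j)
  show ?case
  proof (cases "i = Suc j")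
    case False
    with Suc tinc[of "Suc j"] show ?thesis by fastforce
  qed simp
qed simp

lemma tsig_bounds:
  assumes "0 < \<alpha>" "\<alpha> < 1" "t (n - 1) < t n"
  shows "t (n - 1) < tsig \<alpha> t n" "tsig \<alpha> t n \<le> t n"
    "tsig \<alpha> t n - t (n - 1) = (1 - \<alpha>/2) * tau t n"
proof -
  have "0 < (1 - \<alpha>/2) * (t n - t (n - 1))" "0 \<le> (\<alpha>/2) * (t n - t (n - 1))"
    using assms by simp_all
  thus "t (n - 1) < tsig \<alpha> t n" "tsig \<alpha> t n \<le> t n"
    unfolding tsig_def by (simp_all add: algebra_simps)
  show "tsig \<alpha> t n - t (n - 1) = (1 - \<alpha>/2) * tau t n"
    unfolding tsig_def tau_def by (simp add: algebra_simps)
qed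

lemma bcoef_eq_integral:
  "bcoef \<alpha> t n k = 2 / (tau t k * (tau t k + tau t (k + 1))) *
     integral {t (k - 1)..t k} (\<lambda>s. (s - (t k + t (k - 1))/2) * frac_kernel \<alpha> (tsig \<alpha> t n) s)"
  unfolding bcoef_def tmid_def frac_kernel_def by simp

context
  fixes \<alpha> :: real and t :: "nat \<Rightarrow> real" and n :: nat
  assumes \<alpha>: "0 < \<alpha>" "\<alpha> < 1"
    and tinc: "\<And>k. 1 \<le> k \<Longrightarrow> k \<le> n \<Longrightarrow> t (k - 1) < t k"
begin

lemma tau_pos: "1 \<le> k \<Longrightarrow> k \<le> n \<Longrightarrow> 0 < tau t k"
  using tinc[of k] unfolding tau_def by simp

lemma time_lt_tsig:
  assumes "k < n"
  shows "t k < tsig \<alpha> t n"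
proof -
  have "t k \<le> t (n - 1)"
    using assms by (intro time_grid_mono[where t=t and n=n, OF tinc]) auto
  also have "\<dots> < tsig \<alpha> t n" using tsig_bounds(1)[OF \<alpha> tinc[of n]] assms by simp
  finally show ?thesis .
qed

lemma acoef_eq_integral:
  "k < n \<Longrightarrow> acoef \<alpha> t n k = integral {t (k - 1)..t k} (frac_kernel \<alpha> (tsig \<alpha> t n)) / tau t k"
  using time_lt_tsig[of k] unfolding acoef_def frac_kernel_def[abs_def] by (simp add: min_def)

lemma acoef_diag:
  assumes "1 \<le> n"
  shows "acoef \<alpha> t n n = ((1 - \<alpha>/2) * tau t n) powr (1 - \<alpha>) / Gamma (2 - \<alpha>) / tau t n"
proof -
  note tsig = tsig_bounds[OF \<alpha> tinc[OF assms order_refl]]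
  have "integral {t (n - 1)..tsig \<alpha> t n} (frac_kernel \<alpha> (tsig \<alpha> t n)) =
      (tsig \<alpha> t n - t (n - 1)) powr (1 - \<alpha>) / Gamma (2 - \<alpha>)"
    using frac_kernel_has_integral_up_to_pole[of \<alpha> "t (n - 1)" "tsig \<alpha> t n"] tsig \<alpha>
    by (simp add: integral_unique)
  moreover have "min (t n) (tsig \<alpha> t n) = tsig \<alpha> t n" using tsig by simp
  ultimately show ?thesis
    unfolding acoef_def frac_kernel_def[symmetric] tsig(3) by simp
qed

context
  fixes k :: nat
  assumes k: "1 \<le> k" "k < n"
begin

private lemma grid_step_interval: "t (k - 1) < t k" "t k < tsig \<alpha> t n" "t k - t (k - 1) = tau t k"
  using tinc[of k] k time_lt_tsig[of k] by (auto simp: tau_def)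

lemma acoef_le_frac_kernel:
  "acoef \<alpha> t n k \<le> frac_kernel \<alpha> (tsig \<alpha> t n) (t k)
     - frac_kernel_deriv \<alpha> (tsig \<alpha> t n) (t (k - 1)) * tau t k / 2"
proof -
  have "acoef \<alpha> t n k \<le> (tau t k * frac_kernel \<alpha> (tsig \<alpha> t n) (t k)
      - frac_kernel_deriv \<alpha> (tsig \<alpha> t n) (t (k - 1)) * (tau t k)^2/2) / tau t k"
    using frac_kernel_integral_le[of \<alpha> "t (k - 1)" "t k" "tsig \<alpha> t n"] grid_step_interval \<alpha> tau_pos[of k] k
    by (auto simp: acoef_eq_integral intro!: divide_right_mono)
  also have "\<dots> = frac_kernel \<alpha> (tsig \<alpha> t n) (t k)
     - frac_kernel_deriv \<alpha> (tsig \<alpha> t n) (t (k - 1)) * tau t k / 2"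
    using tau_pos[of k] k by (simp add: field_simps power2_eq_square)
  finally show ?thesis .
qed

context
  assumes next_step: "k + 1 \<le> n"
begin

lemma bcoef_nonneg: "0 \<le> bcoef \<alpha> t n k"
  using frac_kernel_moment_bounds(1)[of \<alpha> "t (k - 1)" "t k" "tsig \<alpha> t n"] grid_step_interval \<alpha>
    tau_pos[of k] tau_pos[of "k + 1"] k next_step
  unfolding bcoef_eq_integral by simp

lemma frac_kernel_le_acoef_minus_bcoef:
  "frac_kernel \<alpha> (tsig \<alpha> t n) (t (k - 1)) \<le> acoef \<alpha> t n k - bcoef \<alpha> t n k"
proof -
  have tk: "0 < tau t k" "0 < tau t (k + 1)" using tau_pos k next_step by auto
  define p where "p = 1 / tau t k"
  define q where "q = 2 / (tau t k * (tau t k + tau t (k + 1)))"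
  have "q * tau t k / 2 = 1 / (tau t k + tau t (k + 1))"
    unfolding q_def using tk by (simp add: divide_simps)
  also have "\<dots> \<le> p" unfolding p_def using tk by (intro divide_left_mono) auto
  finally have "q * (t k - t (k - 1)) / 2 \<le> p" using grid_step_interval by simp
  moreover have "0 \<le> q" unfolding q_def using tk by simp
  ultimately have "p * (t k - t (k - 1)) * frac_kernel \<alpha> (tsig \<alpha> t n) (t (k - 1))
      \<le> acoef \<alpha> t n k - bcoef \<alpha> t n k"
    using frac_kernel_weighted_integral_ge[of \<alpha> "t (k - 1)" "t k" "tsig \<alpha> t n" q p] grid_step_interval \<alpha> k
    unfolding acoef_eq_integral[OF k(2)] bcoef_eq_integral p_def q_def by (simp add: add.commute)
  thus ?thesis unfolding p_def using grid_step_interval tk by simp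
qed

end

end

text \<open>This is where the step-ratio restriction enters, with \<open>x = \<tau>_(k-1)\<close> and \<open>y = \<tau>_k\<close>.\<close>

lemma cube_le_of_ratio:
  fixes x y :: real
  assumes "0 < x" "0 < y" "4 * x \<le> 7 * y"
  shows "x^3 \<le> 3 * y^2 * (x + y)"
proof -
  have "x^2 \<le> (7/4 * y)^2" using assms by (intro power_mono) auto
  hence "x^3 \<le> (7/4 * y)^2 * x" using assms by (simp add: power3_eq_cube power2_eq_square mult_right_mono)
  also have "\<dots> \<le> 3 * y^2 * (x + y)"
    using mult_left_mono[of x "48 * y" "y^2"] assms by (simp add: power2_eq_square algebra_simps)
  finally show ?thesis .
qed

lemma bcoef_div_ratio_le:
  assumes k: "2 \<le> k" "k + 1 \<le> n" and r: "4/7 \<le> rr t k"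
  shows "bcoef \<alpha> t n (k - 1) / rr t k \<le> frac_kernel_deriv \<alpha> (tsig \<alpha> t n) (t (k - 1)) * tau t k / 2"
proof -
  let ?x = "tau t (k - 1)" and ?y = "tau t k" and ?D = "frac_kernel_deriv \<alpha> (tsig \<alpha> t n) (t (k - 1))"
  let ?I = "integral {t (k - 1 - 1)..t (k - 1)}
      (\<lambda>s. (s - (t (k - 1) + t (k - 1 - 1))/2) * frac_kernel \<alpha> (tsig \<alpha> t n) s)"
  have xy: "0 < ?x" "0 < ?y" using tau_pos k by auto
  have "?I \<le> ?D * ?x^3/12"
    using frac_kernel_moment_bounds(2)[of \<alpha> "t (k - 1 - 1)" "t (k - 1)" "tsig \<alpha> t n"]
      tinc[of "k - 1"] time_lt_tsig[of "k - 1"] \<alpha> k by (simp add: tau_def)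
  hence "?I * (2 / (?y * (?x + ?y))) \<le> (?D * ?x^3/12) * (2 / (?y * (?x + ?y)))"
    using xy by (intro mult_right_mono) auto
  also have "\<dots> = ?D * (?x^3 / (6 * ?y * (?x + ?y)))" using xy by (simp add: divide_simps)
  also have "\<dots> \<le> ?D * (?y / 2)"
  proof (rule mult_left_mono)
    have "4 * ?x \<le> 7 * ?y" using r xy unfolding rr_def by (simp add: field_simps)
    hence "?x^3 \<le> 3 * ?y^2 * (?x + ?y)" using cube_le_of_ratio xy by blast
    thus "?x^3 / (6 * ?y * (?x + ?y)) \<le> ?y / 2"
      using xy by (simp add: divide_simps power2_eq_square power3_eq_cube)
  qed (use frac_kernel_deriv_nonneg \<alpha> in auto)
  also have "?I * (2 / (?y * (?x + ?y))) = bcoef \<alpha> t n (k - 1) / rr t k"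
    using xy k unfolding bcoef_eq_integral rr_def by (simp add: divide_simps)
  finally show ?thesis by simp
qed

lemma bcoef_div_ratio_nonneg:
  assumes "2 \<le> k" "k \<le> n"
  shows "0 \<le> bcoef \<alpha> t n (k - 1) / rr t k"
proof -
  have "0 < rr t k" unfolding rr_def using tau_pos[of k] tau_pos[of "k - 1"] assms by simp
  thus ?thesis using bcoef_nonneg[of "k - 1"] assms by simp
qed

lemma frac_kernel_le_Bcoef:
  assumes k: "1 \<le> k" "k < n"
  shows "frac_kernel \<alpha> (tsig \<alpha> t n) (t (k - 1)) \<le> Bcoef \<alpha> t n k"
proof (cases "k = 1")
  case True
  with k frac_kernel_le_acoef_minus_bcoef[OF k] show ?thesis by (simp add: Bcoef_def)
next
  case False
  with k frac_kernel_le_acoef_minus_bcoef[OF k] bcoef_div_ratio_nonneg[of k]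
  show ?thesis by (simp add: Bcoef_def)
qed

lemma Bcoef_first_nonneg: "2 \<le> n \<Longrightarrow> 0 \<le> Bcoef \<alpha> t n 1"
  using frac_kernel_le_Bcoef[of 1] frac_kernel_nonneg[OF \<alpha>(2), of "tsig \<alpha> t n" "t 0"] by simp

context
  assumes ratio: "\<And>k. 2 \<le> k \<Longrightarrow> k \<le> n \<Longrightarrow> 4/7 \<le> rr t k"
begin

lemma Bcoef_le_frac_kernel:
  assumes k: "1 \<le> k" "k < n"
  shows "Bcoef \<alpha> t n k \<le> frac_kernel \<alpha> (tsig \<alpha> t n) (t k)"
proof -
  note a = acoef_le_frac_kernel[OF k]
  have b: "0 \<le> bcoef \<alpha> t n k" using bcoef_nonneg[OF k] k by simp
  show ?thesis
  proof (cases "k = 1")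
    case True
    have "0 \<le> frac_kernel_deriv \<alpha> (tsig \<alpha> t n) (t (k - 1)) * tau t k"
      using frac_kernel_deriv_nonneg[of \<alpha>] tau_pos[of k] \<alpha> k by simp
    with True k a b show ?thesis by (simp add: Bcoef_def)
  next
    case False
    hence "Bcoef \<alpha> t n k = acoef \<alpha> t n k + bcoef \<alpha> t n (k - 1) / rr t k - bcoef \<alpha> t n k"
      using k by (simp add: Bcoef_def)
    moreover have "bcoef \<alpha> t n (k - 1) / rr t k \<le> frac_kernel_deriv \<alpha> (tsig \<alpha> t n) (t (k - 1)) * tau t k / 2"
      using k False ratio[of k] by (intro bcoef_div_ratio_le) auto
    ultimately show ?thesis using a b by linarith
  qed
qed

lemma Bcoef_mono: "1 \<le> k \<Longrightarrow> k + 1 < n \<Longrightarrow> Bcoef \<alpha> t n k \<le> Bcoef \<alpha> t n (k + 1)"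
  using Bcoef_le_frac_kernel[of k] frac_kernel_le_Bcoef[of "k + 1"] by simp

lemma Bcoef_diag_gap:
  assumes n: "2 \<le> n"
  shows "(\<alpha>/2) * ((1 - \<alpha>/2) * tau t n) powr (- \<alpha>) / Gamma (2 - \<alpha>)
    \<le> Bcoef \<alpha> t n n - Bcoef \<alpha> t n (n - 1)"
proof -
  define u where "u = (1 - \<alpha>/2) * tau t n"
  define w where "w = u powr (- \<alpha>)"
  have u: "0 < u" unfolding u_def using \<alpha> tau_pos[of n] n by simp
  have G: "Gamma (2 - \<alpha>) = (1 - \<alpha>) * Gamma (1 - \<alpha>)" "0 < Gamma (1 - \<alpha>)"
    using Gamma_two_minus Gamma_one_minus_pos \<alpha> by auto
  have "acoef \<alpha> t n n = u powr (1 - \<alpha>) / Gamma (2 - \<alpha>) / tau t n"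
    using acoef_diag n unfolding u_def by simp
  also have "u powr (1 - \<alpha>) = u * w" unfolding w_def using u
    by (simp add: powr_diff powr_minus divide_inverse)
  finally have a: "acoef \<alpha> t n n = (1 - \<alpha>/2) * w / Gamma (2 - \<alpha>)"
    unfolding u_def using tau_pos[of n] n by simp
  have "frac_kernel \<alpha> (tsig \<alpha> t n) (t (n - 1)) = w / Gamma (1 - \<alpha>)"
    unfolding frac_kernel_eq w_def u_def using tsig_bounds(3)[OF \<alpha> tinc[of n]] n by simp
  also have "\<dots> = (1 - \<alpha>) * w / Gamma (2 - \<alpha>)" unfolding G(1) using \<alpha> G(2) by simp
  finally have kernel_prev: "frac_kernel \<alpha> (tsig \<alpha> t n) (t (n - 1)) = (1 - \<alpha>) * w / Gamma (2 - \<alpha>)" .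
  have "0 < Gamma (2 - \<alpha>)" using \<alpha> by (simp add: Gamma_real_pos)
  hence "acoef \<alpha> t n n - frac_kernel \<alpha> (tsig \<alpha> t n) (t (n - 1)) = (\<alpha>/2) * w / Gamma (2 - \<alpha>)"
    unfolding a kernel_prev by (simp add: field_simps)
  moreover have "Bcoef \<alpha> t n n = acoef \<alpha> t n n + bcoef \<alpha> t n (n - 1) / rr t n"
    using n by (simp add: Bcoef_def)
  moreover have "Bcoef \<alpha> t n (n - 1) \<le> frac_kernel \<alpha> (tsig \<alpha> t n) (t (n - 1))"
    using n by (intro Bcoef_le_frac_kernel) auto
  moreover have "0 \<le> bcoef \<alpha> t n (n - 1) / rr t n"
    using n by (intro bcoef_div_ratio_nonneg) auto
  ultimately show ?thesis unfolding w_def u_def by linarith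
qed

end

end

lemma powr_le_of_le_root:
  fixes \<alpha> \<tau> Y :: real
  assumes "0 < \<alpha>" "0 < \<tau>" "0 < Y" "\<tau> \<le> Y powr (1 / \<alpha>)"
  shows "\<tau> powr \<alpha> \<le> Y"
proof -
  have "\<tau> powr \<alpha> \<le> (Y powr (1 / \<alpha>)) powr \<alpha>" by (rule powr_mono2) (use assms in auto)
  also have "\<dots> = Y" using assms by (simp add: powr_powr)
  finally show ?thesis .
qed

text \<open>The constant \<open>4/11\<close> of the step-size restrictions is used only through
  \<open>4/11 < 1/2 \<le> 1 - \<alpha>/2\<close>.\<close>

lemma start_coeff_ge_of_step_bound:
  fixes \<alpha> \<tau> m X G :: real
  assumes \<alpha>: "0 < \<alpha>" "\<alpha> < 1" and pos: "0 < \<tau>" "0 < m" "0 < X" "0 < G"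
    and step: "\<tau> \<le> (4 / (11 * (\<alpha>/2) * m * X * G)) powr (1 / \<alpha>)"
  shows "(\<alpha>/2) * m * X \<le> ((1 - \<alpha>/2) * \<tau>) powr (1 - \<alpha>) / G / \<tau>"
proof -
  define P where "P = \<tau> powr \<alpha>"
  have P: "0 < P" unfolding P_def using pos by simp
  have "P \<le> 4 / (11 * (\<alpha>/2) * m * X * G)" unfolding P_def
    using powr_le_of_le_root[OF \<alpha>(1) pos(1) _ step] \<alpha> pos by simp
  hence "(\<alpha>/2) * m * X \<le> (4/11) / (G * P)" using \<alpha> pos P by (simp add: field_simps)
  also have "\<dots> \<le> (1 - \<alpha>/2) powr (1 - \<alpha>) / (G * P)"
  proof -
    have "(1 - \<alpha>/2) powr 1 \<le> (1 - \<alpha>/2) powr (1 - \<alpha>)" by (rule powr_mono') (use \<alpha> in auto)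
    thus ?thesis using \<alpha> pos P by (intro divide_right_mono) auto
  qed
  also have "\<dots> = ((1 - \<alpha>/2) * \<tau>) powr (1 - \<alpha>) / G / \<tau>"
    unfolding powr_mult P_def using pos by (simp add: powr_diff field_simps)
  finally show ?thesis .
qed

lemma gap_coeff_ge_of_step_bound:
  fixes \<alpha> \<tau> m X G :: real
  assumes \<alpha>: "0 < \<alpha>" "\<alpha> < 1" and pos: "0 < \<tau>" "0 < m" "0 < X" "0 < G"
    and step: "\<tau> \<le> (4 / (11 * (1 - \<alpha>/2) * m * X * G)) powr (1 / \<alpha>)"
  shows "(\<alpha>/2) * m * X \<le> (\<alpha>/2) * ((1 - \<alpha>/2) * \<tau>) powr (- \<alpha>) / G"
proof -
  define P where "P = \<tau> powr \<alpha>"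
  have P: "0 < P" unfolding P_def using pos by simp
  have "P \<le> 4 / (11 * (1 - \<alpha>/2) * m * X * G)" unfolding P_def
    using powr_le_of_le_root[OF \<alpha>(1) pos(1) _ step] \<alpha> pos by simp
  hence "(1 - \<alpha>/2) * (m * X * G * P) \<le> 4/11" using \<alpha> pos P by (simp add: field_simps)
  moreover have "(1/2) * (m * X * G * P) \<le> (1 - \<alpha>/2) * (m * X * G * P)"
    using \<alpha> pos P by (intro mult_right_mono) auto
  ultimately have "m * X * G * P \<le> 1" by linarith
  hence "m * X \<le> 1 / (G * P)" using pos P by (simp add: field_simps)
  also have "\<dots> \<le> (1 - \<alpha>/2) powr (- \<alpha>) / (G * P)"
  proof -
    have "(1 - \<alpha>/2) powr 0 \<le> (1 - \<alpha>/2) powr (- \<alpha>)" by (rule powr_mono') (use \<alpha> in auto)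
    thus ?thesis using \<alpha> pos P by (intro divide_right_mono) auto
  qed
  also have "\<dots> = ((1 - \<alpha>/2) * \<tau>) powr (- \<alpha>) / G"
    unfolding powr_mult P_def using pos by (simp add: powr_minus field_simps)
  finally have "m * X \<le> ((1 - \<alpha>/2) * \<tau>) powr (- \<alpha>) / G" .
  from mult_left_mono[OF this, of "\<alpha>/2"] \<alpha> show ?thesis by (simp add: mult.assoc)
qed

definition max_principle_coeffs :: "(nat \<Rightarrow> real) \<Rightarrow> nat \<Rightarrow> real \<Rightarrow> bool" where
  "max_principle_coeffs c n \<gamma> \<longleftrightarrow>
     (\<forall>k. 1 \<le> k \<longrightarrow> k + 1 < n \<longrightarrow> c k \<le> c (k + 1)) \<and> (2 \<le> n \<longrightarrow> 0 \<le> c 1)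
     \<and> \<gamma> \<le> c n - (if n = 1 then 0 else c (n - 1))"

lemma Bcoef_max_principle_coeffs:
  assumes \<alpha>: "0 < \<alpha>" "\<alpha> < 1"
    and tinc: "\<And>k. 1 \<le> k \<Longrightarrow> k \<le> n \<Longrightarrow> t (k - 1) < t k"
    and ratio: "\<And>k. 2 \<le> k \<Longrightarrow> k \<le> n \<Longrightarrow> 4/7 \<le> rr t k"
    and n: "1 \<le> n" and pos: "0 < m" "0 < X"
    and start: "n = 1 \<Longrightarrow> tau t 1 \<le> (4 / (11 * (\<alpha>/2) * m * X * Gamma (2 - \<alpha>))) powr (1 / \<alpha>)"
    and later: "2 \<le> n \<Longrightarrow> tau t n \<le> (4 / (11 * (1 - \<alpha>/2) * m * X * Gamma (2 - \<alpha>))) powr (1 / \<alpha>)"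
  shows "max_principle_coeffs (Bcoef \<alpha> t n) n ((\<alpha>/2) * m * X)"
proof -
  have G: "0 < Gamma (2 - \<alpha>)" using \<alpha> by (simp add: Gamma_real_pos)
  have \<tau>: "0 < tau t n" using tau_pos[where t=t and n=n, OF \<alpha> tinc, of n] n by simp
  show ?thesis
  proof (cases "n = 1")
    case True
    with start_coeff_ge_of_step_bound[OF \<alpha> \<tau> pos G] start acoef_diag[where t=t and n=n, OF \<alpha> tinc n]
    show ?thesis unfolding max_principle_coeffs_def by (simp add: Bcoef_def)
  next
    case False
    with n gap_coeff_ge_of_step_bound[OF \<alpha> \<tau> pos G] later Bcoef_diag_gap[where t=t and n=n, OF \<alpha> tinc ratio]
      Bcoef_mono[where t=t and n=n, OF \<alpha> tinc ratio] Bcoef_first_nonneg[where t=t and n=n, OF \<alpha> tinc]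
    show ?thesis unfolding max_principle_coeffs_def by fastforce
  qed
qed

section \<open>Discrete maximum principle\<close>

lemma max_principle_coeffs_nonneg:
  assumes "max_principle_coeffs c n \<gamma>" "1 \<le> k" "k < n"
  shows "0 \<le> c k"
  using assms(2,3)
proof (induction k)
  case (Suc k)
  with assms(1) show ?case
    unfolding max_principle_coeffs_def by (cases "k = 0") (auto intro: order_trans)
qed simp

lemma sum_weighted_increments_ge:
  fixes c x :: "nat \<Rightarrow> real"
  assumes mono: "\<And>k. 1 \<le> k \<Longrightarrow> k < p \<Longrightarrow> c k \<le> c (k + 1)" and first: "1 \<le> p \<Longrightarrow> 0 \<le> c 1"
    and bound: "\<And>k. k \<le> p \<Longrightarrow> x k \<le> \<beta>"
  shows "(if p = 0 then 0 else c p) * (x p - \<beta>) \<le> (\<Sum>k = 1..p. c k * (x k - x (k - 1)))"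
  using assms
proof (induction p)
  case (Suc p)
  show ?case
  proof (cases "p = 0")
    case True
    thus ?thesis using Suc.prems(2) Suc.prems(3)[of 0] by (simp add: mult_left_mono)
  next
    case False
    have "c p * (x p - \<beta>) \<le> (\<Sum>k = 1..p. c k * (x k - x (k - 1)))"
      using Suc.IH Suc.prems False by auto
    moreover have "(c (p + 1) - c p) * (x p - \<beta>) \<le> 0"
      using Suc.prems(1)[of p] Suc.prems(3)[of p] False by (intro mult_nonneg_nonpos) auto
    ultimately show ?thesis by (simp add: algebra_simps)
  qed
qed simp

text \<open>The scheme at a grid point where \<open>\<phi>^n\<close> is maximal: \<open>P\<close> and \<open>p\<close> are the values of
  \<open>\<phi>^n\<close> and \<open>\<phi>^(n-1)\<close> there, \<open>D1\<close> and \<open>D0\<close> their scaled discrete Laplacians, \<open>S\<close> the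
  history part of the L2-1\<open>\<^sub>\<sigma>\<close> sum and \<open>g = f(y)\<close> the nonlinearity at the predicted value.\<close>

lemma max_principle_inequality:
  fixes c q m w \<kappa> \<sigma> V \<beta> P p D1 D0 S g y :: real
  assumes eq: "c * (P - p) + S
      = m * ((1 - \<sigma>) * D1 + \<sigma> * D0 + V * g - \<kappa> * (((1 - \<sigma>) * P + \<sigma> * p) - V * y))"
    and D1: "D1 \<le> 0" and D0: "D0 \<le> 4 * w * (\<beta> - p)" and S: "q * (p - \<beta>) \<le> S"
    and g: "g + \<kappa> * y \<le> \<kappa> * \<beta>" and p: "p \<le> \<beta>"
    and coeff: "\<sigma> * m * (\<kappa> + 4 * w) \<le> c - q"
    and pos: "0 < m" "0 \<le> \<sigma>" "\<sigma> \<le> 1" "0 \<le> V" "0 \<le> \<kappa>"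
    and denom: "0 < c + \<kappa> * (1 - \<sigma>) * m"
  shows "P \<le> \<beta> + \<kappa> * m * (V - 1) * \<beta> / (c + \<kappa> * (1 - \<sigma>) * m)"
proof -
  have "m * (1 - \<sigma>) * D1 \<le> 0" using pos D1 by (intro mult_nonneg_nonpos) auto
  moreover have "m * \<sigma> * D0 \<le> m * \<sigma> * (4 * w * (\<beta> - p))" using pos D0 by (intro mult_left_mono) auto
  moreover have "m * V * (g + \<kappa> * y) \<le> m * V * (\<kappa> * \<beta>)" using pos g by (intro mult_left_mono) auto
  moreover have "(c - q - \<sigma> * m * (\<kappa> + 4 * w)) * p \<le> (c - q - \<sigma> * m * (\<kappa> + 4 * w)) * \<beta>"
    using coeff p by (intro mult_left_mono) auto
  moreover have "(c + \<kappa> * (1 - \<sigma>) * m) * P = c * p - S + m * (1 - \<sigma>) * D1 + m * \<sigma> * D0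
      + m * V * (g + \<kappa> * y) - m * \<kappa> * \<sigma> * p"
    using eq by (simp add: algebra_simps)
  ultimately have "(c + \<kappa> * (1 - \<sigma>) * m) * P \<le> (c + \<kappa> * (1 - \<sigma>) * m) * \<beta> + \<kappa> * m * (V - 1) * \<beta>"
    using S by (simp add: algebra_simps)
  with denom show ?thesis by (simp add: field_simps)
qed

lemma lap_h_convex_comb:
  "lap_h M h (\<lambda>i j. (1 - \<sigma>) * u i j + \<sigma> * v i j) i j = (1 - \<sigma>) * lap_h M h u i j + \<sigma> * lap_h M h v i j"
  unfolding lap_h_def by (simp add: divide_inverse algebra_simps)

lemma lap_h_uminus: "lap_h M h (\<lambda>i j. - v i j) i j = - lap_h M h v i j"
  unfolding lap_h_def by (simp add: divide_inverse algebra_simps)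

lemma lap_h_le_of_upper_bound:
  assumes "1 \<le> M" "\<And>i j. i < M \<Longrightarrow> j < M \<Longrightarrow> v i j \<le> B" "i < M" "j < M"
  shows "lap_h M h v i j \<le> 4 / h^2 * (B - v i j)"
proof -
  have "v ((i + 1) mod M) j \<le> B" "v ((i + M - 1) mod M) j \<le> B"
       "v i ((j + 1) mod M) \<le> B" "v i ((j + M - 1) mod M) \<le> B"
    using assms by auto
  hence "v ((i + 1) mod M) j + v ((i + M - 1) mod M) j + v i ((j + 1) mod M) + v i ((j + M - 1) mod M)
      - 4 * v i j \<le> 4 * (B - v i j)" by simp
  thus ?thesis unfolding lap_h_def by (simp add: divide_right_mono)
qed

lemma grid_argmax:
  fixes v :: grid
  assumes "1 \<le> M"
  obtains i0 j0 where "i0 < M" "j0 < M" "\<And>i j. i < M \<Longrightarrow> j < M \<Longrightarrow> v i j \<le> v i0 j0"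
proof -
  let ?S = "{..<M} \<times> {..<M}"
  have "(0, 0) \<in> ?S" using assms by auto
  hence "finite (case_prod v ` ?S)" "case_prod v ` ?S \<noteq> {}" by auto
  from Max_in[OF this] obtain i0 j0 where ij0: "(i0, j0) \<in> ?S" "v i0 j0 = Max (case_prod v ` ?S)"
    by auto
  have "v i j \<le> v i0 j0" if "i < M" "j < M" for i j
    unfolding ij0(2) using that by (intro Max_ge) force+
  with ij0(1) that show ?thesis by blast
qed

lemma abs_le_norm_inf: "i < M \<Longrightarrow> j < M \<Longrightarrow> \<bar>v i j\<bar> \<le> norm_inf M v"
  unfolding norm_inf_def by (rule Max_ge) auto

lemma norm_inf_le:
  assumes "1 \<le> M" "\<And>i j. i < M \<Longrightarrow> j < M \<Longrightarrow> \<bar>v i j\<bar> \<le> B"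
  shows "norm_inf M v \<le> B"
proof -
  have "(0, 0) \<in> {..<M} \<times> {..<M}" using assms(1) by auto
  thus ?thesis unfolding norm_inf_def using assms(2) by (subst Max_le_iff) auto
qed

lemma abs_convex_comb_le:
  fixes a b \<sigma> \<beta> :: real
  assumes "\<bar>a\<bar> \<le> \<beta>" "\<bar>b\<bar> \<le> \<beta>" "0 \<le> \<sigma>" "\<sigma> \<le> 1"
  shows "\<bar>(1 - \<sigma>) * a + \<sigma> * b\<bar> \<le> \<beta>"
proof -
  have "(1 - \<sigma>) * a + \<sigma> * b \<le> \<beta>" by (rule convex_bound_le) (use assms in auto)
  moreover have "(1 - \<sigma>) * (- a) + \<sigma> * (- b) \<le> \<beta>" by (rule convex_bound_le) (use assms in auto)
  ultimately show ?thesis unfolding abs_le_iff by linarith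
qed

lemma scheme_step_upper_bound:
  fixes \<phi> :: "nat \<Rightarrow> grid" and \<psi> :: grid and c :: "nat \<Rightarrow> real" and f :: "real \<Rightarrow> real"
  assumes M: "1 \<le> M" and n: "1 \<le> n"
    and hist: "\<And>k i j. k < n \<Longrightarrow> i < M \<Longrightarrow> j < M \<Longrightarrow> \<bar>\<phi> k i j\<bar> \<le> \<beta>"
    and pred: "\<And>i j. i < M \<Longrightarrow> j < M \<Longrightarrow> \<bar>\<psi> i j\<bar> \<le> \<beta>"
    and stab: "\<And>y. \<bar>y\<bar> \<le> \<beta> \<Longrightarrow> f y + \<kappa> * y \<le> \<kappa> * \<beta>"
    and coeffs: "max_principle_coeffs c n (\<sigma> * m * (\<kappa> + 4 * e / h^2))"
    and pos: "0 < m" "0 \<le> e" "0 \<le> \<sigma>" "\<sigma> \<le> 1" "0 \<le> V" "0 \<le> \<kappa>"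
    and denom: "0 < c n + \<kappa> * (1 - \<sigma>) * m"
    and eq: "\<And>i j. i < M \<Longrightarrow> j < M \<Longrightarrow>
      (\<Sum>k = 1..n. c k * (\<phi> k i j - \<phi> (k - 1) i j)) =
      m * (e * lap_h M h (\<lambda>i j. (1 - \<sigma>) * \<phi> n i j + \<sigma> * \<phi> (n - 1) i j) i j
          + V * f ((1 - \<sigma>) * \<psi> i j + \<sigma> * \<phi> (n - 1) i j)
          - \<kappa> * (((1 - \<sigma>) * \<phi> n i j + \<sigma> * \<phi> (n - 1) i j) - V * ((1 - \<sigma>) * \<psi> i j + \<sigma> * \<phi> (n - 1) i j)))"
    and ij: "i < M" "j < M"
  shows "\<phi> n i j \<le> \<beta> + \<kappa> * m * (V - 1) * \<beta> / (c n + \<kappa> * (1 - \<sigma>) * m)"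
proof -
  obtain a b where ab: "a < M" "b < M" and max: "\<And>i j. i < M \<Longrightarrow> j < M \<Longrightarrow> \<phi> n i j \<le> \<phi> n a b"
    using grid_argmax[OF M] by blast
  let ?q = "if n = 1 then 0 else c (n - 1)"
  let ?y = "(1 - \<sigma>) * \<psi> a b + \<sigma> * \<phi> (n - 1) a b"
  have prev: "\<phi> (n - 1) i j \<le> \<beta>" if "i < M" "j < M" for i j
    using hist[of "n - 1" i j] that n by simp
  have sum_split: "(\<Sum>k = 1..n. c k * (\<phi> k a b - \<phi> (k - 1) a b))
      = c n * (\<phi> n a b - \<phi> (n - 1) a b) + (\<Sum>k = 1..n - 1. c k * (\<phi> k a b - \<phi> (k - 1) a b))"
    using n by (cases n) (simp_all add: sum.cl_ivl_Suc)
  have lap_split: "lap_h M h (\<lambda>i j. (1 - \<sigma>) * \<phi> n i j + \<sigma> * \<phi> (n - 1) i j) a b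
      = (1 - \<sigma>) * lap_h M h (\<phi> n) a b + \<sigma> * lap_h M h (\<phi> (n - 1)) a b"
    by (rule lap_h_convex_comb)
  have eq_ab: "c n * (\<phi> n a b - \<phi> (n - 1) a b) + (\<Sum>k = 1..n - 1. c k * (\<phi> k a b - \<phi> (k - 1) a b))
      = m * ((1 - \<sigma>) * (e * lap_h M h (\<phi> n) a b) + \<sigma> * (e * lap_h M h (\<phi> (n - 1)) a b)
          + V * f ?y - \<kappa> * (((1 - \<sigma>) * \<phi> n a b + \<sigma> * \<phi> (n - 1) a b) - V * ?y))"
    using eq[OF ab] unfolding sum_split lap_split by (simp add: algebra_simps)
  have "\<phi> n a b \<le> \<beta> + \<kappa> * m * (V - 1) * \<beta> / (c n + \<kappa> * (1 - \<sigma>) * m)"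
  proof (rule max_principle_inequality[OF eq_ab _ _ _ _ _ _ pos(1,3-6) denom])
    show "e * lap_h M h (\<phi> n) a b \<le> 0"
      using lap_h_le_of_upper_bound[where v="\<phi> n" and B="\<phi> n a b", OF M max ab] pos(2) by (simp add: mult_nonneg_nonpos)
    show "e * lap_h M h (\<phi> (n - 1)) a b \<le> 4 * (e / h^2) * (\<beta> - \<phi> (n - 1) a b)"
      using mult_left_mono[OF lap_h_le_of_upper_bound[where v="\<phi> (n - 1)" and h=h, OF M prev ab] pos(2)]
      by (simp add: algebra_simps)
    show "?q * (\<phi> (n - 1) a b - \<beta>) \<le> (\<Sum>k = 1..n - 1. c k * (\<phi> k a b - \<phi> (k - 1) a b))"
      using sum_weighted_increments_ge[of "n - 1" c "\<lambda>k. \<phi> k a b" \<beta>] coeffs hist[OF _ ab] n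
      unfolding max_principle_coeffs_def by (force simp: abs_le_iff)
    show "f ?y + \<kappa> * ?y \<le> \<kappa> * \<beta>"
      using stab abs_convex_comb_le[OF pred[OF ab] hist[OF _ ab] pos(3,4)] n by simp
    show "\<phi> (n - 1) a b \<le> \<beta>" using prev[OF ab] .
    show "\<sigma> * m * (\<kappa> + 4 * (e / h^2)) \<le> c n - ?q"
      using coeffs unfolding max_principle_coeffs_def by simp
  qed
  with max[OF ij] show ?thesis by linarith
qed

lemma scheme_step_abs_bound:
  fixes \<phi> :: "nat \<Rightarrow> grid" and \<psi> :: grid and c :: "nat \<Rightarrow> real" and f :: "real \<Rightarrow> real"
  assumes M: "1 \<le> M" and n: "1 \<le> n"
    and hist: "\<And>k i j. k < n \<Longrightarrow> i < M \<Longrightarrow> j < M \<Longrightarrow> \<bar>\<phi> k i j\<bar> \<le> \<beta>"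
    and pred: "\<And>i j. i < M \<Longrightarrow> j < M \<Longrightarrow> \<bar>\<psi> i j\<bar> \<le> \<beta>"
    and stab: "\<And>y. \<bar>y\<bar> \<le> \<beta> \<Longrightarrow> \<bar>f y + \<kappa> * y\<bar> \<le> \<kappa> * \<beta>"
    and coeffs: "max_principle_coeffs c n (\<sigma> * m * (\<kappa> + 4 * e / h^2))"
    and pos: "0 < m" "0 \<le> e" "0 \<le> \<sigma>" "\<sigma> \<le> 1" "0 \<le> V" "0 \<le> \<kappa>"
    and denom: "0 < c n + \<kappa> * (1 - \<sigma>) * m"
    and eq: "\<And>i j. i < M \<Longrightarrow> j < M \<Longrightarrow>
      (\<Sum>k = 1..n. c k * (\<phi> k i j - \<phi> (k - 1) i j)) =
      m * (e * lap_h M h (\<lambda>i j. (1 - \<sigma>) * \<phi> n i j + \<sigma> * \<phi> (n - 1) i j) i j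
          + V * f ((1 - \<sigma>) * \<psi> i j + \<sigma> * \<phi> (n - 1) i j)
          - \<kappa> * (((1 - \<sigma>) * \<phi> n i j + \<sigma> * \<phi> (n - 1) i j) - V * ((1 - \<sigma>) * \<psi> i j + \<sigma> * \<phi> (n - 1) i j)))"
    and ij: "i < M" "j < M"
  shows "\<bar>\<phi> n i j\<bar> \<le> \<beta> + \<kappa> * m * (V - 1) * \<beta> / (c n + \<kappa> * (1 - \<sigma>) * m)"
proof -
  have "\<phi> n i j \<le> \<beta> + \<kappa> * m * (V - 1) * \<beta> / (c n + \<kappa> * (1 - \<sigma>) * m)"
  proof (rule scheme_step_upper_bound[OF M n hist pred _ coeffs pos denom eq ij])
    show "f y + \<kappa> * y \<le> \<kappa> * \<beta>" if "\<bar>y\<bar> \<le> \<beta>" for y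
      using stab[OF that] by (simp add: abs_le_iff)
  qed
  text \<open>The lower bound is the upper bound for \<open>-\<phi>\<close>, which solves the scheme with
    the nonlinearity \<open>y \<mapsto> -f(-y)\<close>.\<close>
  moreover have "- \<phi> n i j \<le> \<beta> + \<kappa> * m * (V - 1) * \<beta> / (c n + \<kappa> * (1 - \<sigma>) * m)"
  proof (rule scheme_step_upper_bound[where \<phi>="\<lambda>k i j. - \<phi> k i j" and \<psi>="\<lambda>i j. - \<psi> i j"
        and f="\<lambda>y. - f (- y)", OF M n _ _ _ coeffs pos denom _ ij])
    show "\<bar>- \<phi> k a b\<bar> \<le> \<beta>" if "k < n" "a < M" "b < M" for k a b using hist that by simp
    show "\<bar>- \<psi> a b\<bar> \<le> \<beta>" if "a < M" "b < M" for a b using pred that by simp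
    show "- f (- y) + \<kappa> * y \<le> \<kappa> * \<beta>" if "\<bar>y\<bar> \<le> \<beta>" for y
      using stab[of "- y"] that by (simp add: abs_le_iff)
    fix a b assume ab: "a < M" "b < M"
    have lap: "lap_h M h (\<lambda>i j. (1 - \<sigma>) * - \<phi> n i j + \<sigma> * - \<phi> (n - 1) i j) a b
        = - lap_h M h (\<lambda>i j. (1 - \<sigma>) * \<phi> n i j + \<sigma> * \<phi> (n - 1) i j) a b"
      by (simp only: lap_h_convex_comb lap_h_uminus)
    have arg: "- ((1 - \<sigma>) * - \<psi> a b + \<sigma> * - \<phi> (n - 1) a b) = (1 - \<sigma>) * \<psi> a b + \<sigma> * \<phi> (n - 1) a b"
      by simp
    have sum: "(\<Sum>k = 1..n. c k * (- \<phi> k a b - - \<phi> (k - 1) a b))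
        = - (\<Sum>k = 1..n. c k * (\<phi> k a b - \<phi> (k - 1) a b))"
      by (simp add: sum_negf[symmetric] algebra_simps)
    show "(\<Sum>k = 1..n. c k * (- \<phi> k a b - - \<phi> (k - 1) a b)) =
      m * (e * lap_h M h (\<lambda>i j. (1 - \<sigma>) * - \<phi> n i j + \<sigma> * - \<phi> (n - 1) i j) a b
          + V * - f (- ((1 - \<sigma>) * - \<psi> a b + \<sigma> * - \<phi> (n - 1) a b))
          - \<kappa> * (((1 - \<sigma>) * - \<phi> n a b + \<sigma> * - \<phi> (n - 1) a b) - V * ((1 - \<sigma>) * - \<psi> a b + \<sigma> * - \<phi> (n - 1) a b)))"
      unfolding lap arg sum eq[OF ab] by (simp add: algebra_simps)
  qed
  ultimately show ?thesis by linarith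
qed

lemma scheme_step_norm_bound:
  fixes \<phi> :: "nat \<Rightarrow> grid" and \<psi> :: grid and c :: "nat \<Rightarrow> real" and f :: "real \<Rightarrow> real"
  assumes M: "1 \<le> M" and n: "1 \<le> n"
    and hist: "\<And>k. k < n \<Longrightarrow> norm_inf M (\<phi> k) \<le> \<beta>" and pred: "norm_inf M \<psi> \<le> \<beta>"
    and stab: "\<And>y. \<bar>y\<bar> \<le> \<beta> \<Longrightarrow> \<bar>f y + \<kappa> * y\<bar> \<le> \<kappa> * \<beta>"
    and coeffs: "max_principle_coeffs c n (\<sigma> * m * (\<kappa> + 4 * e / h^2))"
    and pos: "0 < m" "0 < e" "0 < \<sigma>" "\<sigma> \<le> 1" "0 \<le> V" "V \<le> 1" "0 \<le> \<kappa>" "h \<noteq> 0"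
    and eq: "\<And>i j. i < M \<Longrightarrow> j < M \<Longrightarrow>
      (\<Sum>k = 1..n. c k * (\<phi> k i j - \<phi> (k - 1) i j)) =
      m * (e * lap_h M h (\<lambda>i j. (1 - \<sigma>) * \<phi> n i j + \<sigma> * \<phi> (n - 1) i j) i j
          + V * f ((1 - \<sigma>) * \<psi> i j + \<sigma> * \<phi> (n - 1) i j)
          - \<kappa> * (((1 - \<sigma>) * \<phi> n i j + \<sigma> * \<phi> (n - 1) i j) - V * ((1 - \<sigma>) * \<psi> i j + \<sigma> * \<phi> (n - 1) i j)))"
  shows "norm_inf M (\<phi> n) \<le> \<beta> + \<kappa> * m * (V - 1) * \<beta> / (c n + \<kappa> * (1 - \<sigma>) * m)
    \<and> \<kappa> * m * (V - 1) * \<beta> / (c n + \<kappa> * (1 - \<sigma>) * m) \<le> 0"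
proof
  have "0 \<le> (if n = 1 then 0 else c (n - 1))"
    using max_principle_coeffs_nonneg[OF coeffs, of "n - 1"] n by simp
  moreover have "0 < \<sigma> * m * (\<kappa> + 4 * e / h^2)" using pos by (simp add: add_nonneg_pos)
  moreover have "0 \<le> \<kappa> * (1 - \<sigma>) * m" using pos by simp
  ultimately have denom: "0 < c n + \<kappa> * (1 - \<sigma>) * m"
    using coeffs unfolding max_principle_coeffs_def by linarith
  have "0 \<le> \<beta>" using abs_le_norm_inf[of 0 M 0 "\<phi> 0"] hist[of 0] M n by simp
  with pos have "(\<kappa> * m * \<beta>) * (V - 1) \<le> 0" by (intro mult_nonneg_nonpos) auto
  with denom show "\<kappa> * m * (V - 1) * \<beta> / (c n + \<kappa> * (1 - \<sigma>) * m) \<le> 0"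
    by (intro divide_nonpos_pos) (simp_all add: mult_ac)
  show "norm_inf M (\<phi> n) \<le> \<beta> + \<kappa> * m * (V - 1) * \<beta> / (c n + \<kappa> * (1 - \<sigma>) * m)"
  proof (rule norm_inf_le[OF M])
    fix i j assume ij: "i < M" "j < M"
    show "\<bar>\<phi> n i j\<bar> \<le> \<beta> + \<kappa> * m * (V - 1) * \<beta> / (c n + \<kappa> * (1 - \<sigma>) * m)"
    proof (rule scheme_step_abs_bound[OF M n _ _ stab coeffs pos(1) less_imp_le[OF pos(2)]
          less_imp_le[OF pos(3)] pos(4,5,7) denom eq ij])
      show "\<bar>\<phi> k a b\<bar> \<le> \<beta>" if "k < n" "a < M" "b < M" for k a b
        using abs_le_norm_inf[OF that(2,3), of "\<phi> k"] hist[OF that(1)] by simp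
      show "\<bar>\<psi> a b\<bar> \<le> \<beta>" if "a < M" "b < M" for a b
        using abs_le_norm_inf[OF that, of \<psi>] pred by simp
    qed
  qed
qed

section \<open>The nonlinearity\<close>

lemma nonlinearity_zeros:
  fixes f F :: "real \<Rightarrow> real"
  assumes "(\<beta> = 1 \<and> F = (\<lambda>x. (1 - x^2)^2 / 4) \<and> f = (\<lambda>x. x - x^3))
       \<or> (\<exists>\<theta> \<theta>c. 0 < \<theta> \<and> \<theta> < \<theta>c
            \<and> F = (\<lambda>x. \<theta>/2 * ((1 + x) * ln (1 + x) + (1 - x) * ln (1 - x)) - \<theta>c/2 * x^2)
            \<and> f = (\<lambda>x. \<theta>/2 * ln ((1 - x) / (1 + x)) + \<theta>c * x)
            \<and> 0 < \<beta> \<and> \<beta> < 1 \<and> f \<beta> = 0)"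
  shows "0 < \<beta>" "f \<beta> = 0" "f (- \<beta>) = 0" "\<And>x. \<bar>x\<bar> \<le> \<beta> \<Longrightarrow> f differentiable at x"
proof -
  have "0 < \<beta> \<and> f \<beta> = 0 \<and> f (- \<beta>) = 0 \<and> (\<forall>x. \<bar>x\<bar> \<le> \<beta> \<longrightarrow> f differentiable at x)"
    using assms
  proof
    assume "\<beta> = 1 \<and> F = (\<lambda>x. (1 - x^2)^2 / 4) \<and> f = (\<lambda>x. x - x^3)"
    thus ?thesis by auto
  next
    assume "\<exists>\<theta> \<theta>c. 0 < \<theta> \<and> \<theta> < \<theta>c
            \<and> F = (\<lambda>x. \<theta>/2 * ((1 + x) * ln (1 + x) + (1 - x) * ln (1 - x)) - \<theta>c/2 * x^2)
            \<and> f = (\<lambda>x. \<theta>/2 * ln ((1 - x) / (1 + x)) + \<theta>c * x)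
            \<and> 0 < \<beta> \<and> \<beta> < 1 \<and> f \<beta> = 0"
    then obtain \<theta> \<theta>c where f: "f = (\<lambda>x. \<theta>/2 * ln ((1 - x) / (1 + x)) + \<theta>c * x)"
      and \<beta>: "0 < \<beta>" "\<beta> < 1" "f \<beta> = 0" by blast
    have "ln ((1 + \<beta>) / (1 - \<beta>)) = - ln ((1 - \<beta>) / (1 + \<beta>))"
      using \<beta> by (simp add: ln_div)
    hence "f (- \<beta>) = - f \<beta>" unfolding f by simp
    moreover have "f differentiable at x" if "\<bar>x\<bar> \<le> \<beta>" for x
    proof -
      have "0 < 1 - x" "0 < 1 + x" using that \<beta> by auto
      thus ?thesis unfolding f by (auto intro!: derivative_eq_intros simp: real_differentiable_def)
    qed
    ultimately show ?thesis using \<beta> by auto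
  qed
  thus "0 < \<beta>" "f \<beta> = 0" "f (- \<beta>) = 0" "\<And>x. \<bar>x\<bar> \<le> \<beta> \<Longrightarrow> f differentiable at x" by auto
qed

lemma stabilized_nonlinearity_bound:
  fixes f :: "real \<Rightarrow> real"
  assumes zeros: "f \<beta> = 0" "f (- \<beta>) = 0"
    and diff: "\<And>x. \<bar>x\<bar> \<le> \<beta> \<Longrightarrow> f differentiable at x"
    and lip: "\<And>x. x \<in> {-\<beta>..\<beta>} \<Longrightarrow> \<bar>deriv f x\<bar> \<le> \<kappa>"
    and y: "\<bar>y\<bar> \<le> \<beta>"
  shows "\<bar>f y + \<kappa> * y\<bar> \<le> \<kappa> * \<beta>"
proof -
  let ?g = "\<lambda>x. f x + \<kappa> * x"
  have mono: "\<exists>D. (?g has_real_derivative D) (at x) \<and> 0 \<le> D" if "- \<beta> \<le> x" "x \<le> \<beta>" for x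
  proof -
    have "(f has_real_derivative deriv f x) (at x)"
      using diff[of x] that DERIV_deriv_iff_real_differentiable by auto
    moreover have "\<bar>deriv f x\<bar> \<le> \<kappa>" using lip[of x] that by simp
    ultimately show ?thesis by (intro exI[of _ "deriv f x + \<kappa>"]) (auto intro!: derivative_eq_intros)
  qed
  have "?g y \<le> ?g \<beta>" by (rule DERIV_nonneg_imp_nondecreasing) (use y mono in auto)
  moreover have "?g (- \<beta>) \<le> ?g y" by (rule DERIV_nonneg_imp_nondecreasing) (use y mono in auto)
  ultimately show ?thesis using zeros by (simp add: abs_le_iff)
qed

theorem mainTheorem13:
  fixes L \<epsilon> m \<alpha> \<kappa> \<beta> T K1 R0 :: real
    and M N :: nat
    and F f V V' :: "real \<Rightarrow> real"
    and t :: "nat \<Rightarrow> real"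
    and \<phi> \<phi>hat :: "nat \<Rightarrow> grid"
    and R :: "nat \<Rightarrow> real"
  defines "h \<equiv> L / real M"
    and "\<sigma> \<equiv> \<alpha> / 2"
  assumes L_pos: "L > 0" and M_pos: "M \<ge> 1"
    and m_pos: "m > 0" and eps_pos: "\<epsilon> > 0" and alpha: "0 < \<alpha>" "\<alpha> < 1"
    and nonlin:
      "(\<beta> = 1 \<and> F = (\<lambda>x. (1 - x^2)^2 / 4) \<and> f = (\<lambda>x. x - x^3))
       \<or> (\<exists>\<theta> \<theta>c. 0 < \<theta> \<and> \<theta> < \<theta>c
            \<and> F = (\<lambda>x. \<theta>/2 * ((1 + x) * ln (1 + x) + (1 - x) * ln (1 - x)) - \<theta>c/2 * x^2)
            \<and> f = (\<lambda>x. \<theta>/2 * ln ((1 - x) / (1 + x)) + \<theta>c * x)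
            \<and> 0 < \<beta> \<and> \<beta> < 1 \<and> f \<beta> = 0)"
    (* auxiliary functional V, assumptions (A1)-(A3) with K_2 = 1 *)
    and V_deriv: "\<And>x. (V has_real_derivative V' x) (at x)"
    and V'_cont: "continuous_on UNIV V'"
    and V'_lip: "\<exists>Lp. \<forall>x y. \<bar>V' x - V' y\<bar> \<le> Lp * \<bar>x - y\<bar>"
    and V_one: "V 1 = 1" and V'_one: "V' 1 = 0"
    and V'_bnd: "\<And>x. \<bar>V' x\<bar> \<le> K1"
    and V_range: "\<And>x. 0 \<le> V x \<and> V x \<le> 1"
    and V_mono: "\<And>z1 z2. \<bar>z1 - 1\<bar> \<le> \<bar>z2 - 1\<bar> \<Longrightarrow> \<bar>V z1 - 1\<bar> \<le> \<bar>V z2 - 1\<bar>"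
    and t0: "t 0 = 0" and tN: "t N = T"
    and t_mono: "\<And>k. 1 \<le> k \<Longrightarrow> k \<le> N \<Longrightarrow> t (k - 1) < t k"
    and ratio: "\<And>k. 2 \<le> k \<Longrightarrow> k \<le> N \<Longrightarrow> rr t k \<ge> 4/7"
    and kappa: "\<kappa> \<ge> 0" "\<And>x. x \<in> {-\<beta>..\<beta>} \<Longrightarrow> \<bar>deriv f x\<bar> \<le> \<kappa>"
    and init: "norm_inf M (\<phi> 0) \<le> \<beta>" and R_init: "R 0 = R0"
    and tau1: "tau t 1 \<le> min
        ((4 / (11 * \<sigma> * m * (\<kappa> + 4 * \<epsilon>^2 / h^2) * Gamma (2 - \<alpha>))) powr (1 / \<alpha>))
        ((4 / (11 * \<kappa> * (1 - \<sigma>) * m * Gamma (2 - \<alpha>))) powr (1 / \<alpha>))"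
    and taun: "\<And>n. 1 \<le> n \<Longrightarrow> n \<le> N \<Longrightarrow>
        tau t n \<le> (4 / (11 * (1 - \<sigma>) * m * (4 * \<epsilon>^2 / h^2 + \<kappa>) * Gamma (2 - \<alpha>))) powr (1 / \<alpha>)"
    and hat1_bnd: "N \<ge> 1 \<Longrightarrow> norm_inf M (\<phi>hat 1) \<le> \<beta>"
    and hat1_eq: "\<And>i j. N \<ge> 1 \<Longrightarrow> i < M \<Longrightarrow> j < M \<Longrightarrow>
        Bcoef \<alpha> t 1 1 * (\<phi>hat 1 i j - \<phi> 0 i j)
        = m * (\<epsilon>^2 * lap_h M h (\<lambda>i j. (1 - \<sigma>) * \<phi>hat 1 i j + \<sigma> * \<phi> 0 i j) i j
               + f ((1 - \<sigma>) * \<phi>hat 1 i j + \<sigma> * \<phi> 0 i j))"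
    and hat_pred: "\<And>n i j. 2 \<le> n \<Longrightarrow> n \<le> N \<Longrightarrow> i < M \<Longrightarrow> j < M \<Longrightarrow>
        \<phi>hat n i j = min (max ((1 + rr t n) * \<phi> (n - 1) i j - rr t n * \<phi> (n - 2) i j) (- \<beta>)) \<beta>"
    and phi_eq: "\<And>n i j. 1 \<le> n \<Longrightarrow> n \<le> N \<Longrightarrow> i < M \<Longrightarrow> j < M \<Longrightarrow>
        (let hs = (\<lambda>i j. (1 - \<sigma>) * \<phi>hat n i j + \<sigma> * \<phi> (n - 1) i j);
             ps = (\<lambda>i j. (1 - \<sigma>) * \<phi> n i j + \<sigma> * \<phi> (n - 1) i j);
             Vn = V (g_h M h F hs (R (n - 1)))
         in (\<Sum>k = 1..n. Bcoef \<alpha> t n k * (\<phi> k i j - \<phi> (k - 1) i j))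
            = m * (\<epsilon>^2 * lap_h M h ps i j + Vn * f (hs i j) - \<kappa> * (ps i j - Vn * hs i j)))"
    and R_eq: "\<And>n. 1 \<le> n \<Longrightarrow> n \<le> N \<Longrightarrow>
        (let hs = (\<lambda>i j. (1 - \<sigma>) * \<phi>hat n i j + \<sigma> * \<phi> (n - 1) i j);
             ps = (\<lambda>i j. (1 - \<sigma>) * \<phi> n i j + \<sigma> * \<phi> (n - 1) i j);
             Vn = V (g_h M h F hs (R (n - 1)));
             D\<phi> = (\<lambda>i j. (\<phi> n i j - \<phi> (n - 1) i j) / tau t n)
         in (R n - R (n - 1)) / tau t n
            = - Vn * ip_h M h (\<lambda>i j. f (hs i j)) D\<phi>
              + \<kappa> * ip_h M h (\<lambda>i j. ps i j - Vn * hs i j) D\<phi>)"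
  shows "\<forall>n. 1 \<le> n \<and> n \<le> N \<longrightarrow>
     (let Vn = V (g_h M h F (\<lambda>i j. (1 - \<sigma>) * \<phi>hat n i j + \<sigma> * \<phi> (n - 1) i j) (R (n - 1)));
          corr = \<kappa> * m * (Vn - 1) * \<beta> / (Bcoef \<alpha> t n n + \<kappa> * (1 - \<sigma>) * m)
      in norm_inf M (\<phi> n) \<le> \<beta> + corr \<and> corr \<le> 0)"
proof -
  have h: "0 < h" using L_pos M_pos by (simp add: h_def)
  have \<sigma>: "\<sigma> = \<alpha>/2" "0 < \<sigma>" "\<sigma> \<le> 1" using alpha by (auto simp: \<sigma>_def)
  note zeros = nonlinearity_zeros[OF nonlin]
  note stab = stabilized_nonlinearity_bound[OF zeros(2,3,4) kappa(2)]
  have coeffs: "max_principle_coeffs (Bcoef \<alpha> t n) n (\<sigma> * m * (\<kappa> + 4 * \<epsilon>^2 / h^2))"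
    if "1 \<le> n" "n \<le> N" for n
    using Bcoef_max_principle_coeffs[OF alpha, of n t m "\<kappa> + 4 * \<epsilon>^2 / h^2"] t_mono ratio that
      m_pos kappa(1) eps_pos h tau1 taun[of n] unfolding \<sigma>(1) by (simp add: add.commute add_nonneg_pos)
  have pred: "norm_inf M (\<phi>hat n) \<le> \<beta>" if "1 \<le> n" "n \<le> N" for n
  proof (cases "n = 1")
    case False
    with that hat_pred zeros(1) show ?thesis
      by (intro norm_inf_le[OF M_pos]) (simp add: min_def max_def abs_le_iff)
  qed (use hat1_bnd that in simp)
  have step: "let Vn = V (g_h M h F (\<lambda>i j. (1 - \<sigma>) * \<phi>hat n i j + \<sigma> * \<phi> (n - 1) i j) (R (n - 1)));
          corr = \<kappa> * m * (Vn - 1) * \<beta> / (Bcoef \<alpha> t n n + \<kappa> * (1 - \<sigma>) * m)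
      in norm_inf M (\<phi> n) \<le> \<beta> + corr \<and> corr \<le> 0"
    if "1 \<le> n" "n \<le> N" "\<And>k. k < n \<Longrightarrow> norm_inf M (\<phi> k) \<le> \<beta>" for n
    unfolding Let_def using phi_eq[OF that(1,2)] V_range
    by (intro scheme_step_norm_bound[OF M_pos that(1) that(3) pred[OF that(1,2)] stab coeffs[OF that(1,2)]])
      (use \<sigma>(2,3) m_pos eps_pos kappa(1) h in \<open>auto simp: Let_def\<close>)
  have bounded: "n \<le> N \<longrightarrow> norm_inf M (\<phi> n) \<le> \<beta>" for n
  proof (induction n rule: less_induct)
    case (less n)
    with init step[of n] show ?case by (cases "n = 0") (auto simp: Let_def)
  qed
  show ?thesis using step bounded by simp
qed

end
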